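(* Let $r\in(0,1)$ and let $(\eta(t))_{t\in\mathbb{Z}_+}$ be the nonlinear process with $\mathbb{E}(\eta(0))=r$. Then on a common probability space one can construct this nonlinear process together with an M/D/1 queue $(\zeta(t))_{t\in\mathbb{Z}_+}$ with arrival rate $r$ and $\zeta(0)=\eta(0)$ such that $\eta(t)\le\zeta(t)$ almost surely for every $t\ge 0$. Consequently, if moreover $\mathbb{E}(e^{\lambda_0\eta(0)})<\infty$ for some $\lambda_0>0$, then there is $\lambda>0$ with $\sup_{t\ge0}\mathbb{E}(e^{\lambda\eta(t)})<\infty$.
   Context: The nonlinear process $(\eta(t))_{t\in\mathbb{Z}_+}$ takes values in $\mathbb{Z}_+$: $\eta(0)$ has a given distribution; given $\eta(t)$, set $\rho(t):=\mathbb{P}(\eta(t)>0)$, let $N_{t+1}$ be Poisson with mean $\rho(t)$ (mean $0$ meaning identically $0$), independent of everything before, and set $\eta(t+1):=\eta(t)-\mathbf{1}(\eta(t)>0)+N_{t+1}$. The M/D/1 queue with arrival rate $\rho\ge 0$ is the Markov chain $(\zeta(t))_{t\in\mathbb{Z}_+}$ on $\mathbb{Z}_+$ given by $\zeta(t+1):=\zeta(t)-\mathbf{1}(\zeta(t)>0)+M_{t+1}$, where $(M_t)_{t\ge1}$ are i.i.d. Poisson random variables with mean $\rho$, independent of $\zeta(0)$. *)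

theory Defs
  imports "HOL-Probability.Probability"
begin

(* Poisson(rho) point probabilities; for rho = 0 this is the point mass at 0 (0^0 = 1). *)
definition poisson_prob :: "real \<Rightarrow> nat \<Rightarrow> real" where
  "poisson_prob \<rho> k = exp (- \<rho>) * \<rho> ^ k / fact k"

fun dyn :: "('w \<Rightarrow> nat) \<Rightarrow> (nat \<Rightarrow> 'w \<Rightarrow> nat) \<Rightarrow> nat \<Rightarrow> 'w \<Rightarrow> nat" where
  "dyn x0 A 0 \<omega> = x0 \<omega>"
| "dyn x0 A (Suc t) \<omega> = dyn x0 A t \<omega> - (if dyn x0 A t \<omega> > 0 then 1 else 0) + A (Suc t) \<omega>"

(* Independence of N(t+1) from (eta0, N 1, ..., N t) is expressed via the
   nat-list valued vectors [N(t+1)] and [eta0, N 1, ..., N t]. *)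
(* eta0 and the arrivals N 1, N 2, ... on the probability space P realise the
   nonlinear process with initial law mu0:  eta = dyn eta0 N. *)
definition nonlinear_process ::
  "'w measure \<Rightarrow> nat pmf \<Rightarrow> ('w \<Rightarrow> nat) \<Rightarrow> (nat \<Rightarrow> 'w \<Rightarrow> nat) \<Rightarrow> bool" where
  "nonlinear_process P \<mu>0 \<eta>0 N \<longleftrightarrow>
     prob_space P \<and>
     \<eta>0 \<in> measurable P (count_space UNIV) \<and>
     (\<forall>k. measure P {\<omega> \<in> space P. \<eta>0 \<omega> = k} = pmf \<mu>0 k) \<and>
     (\<forall>t. let \<rho> = measure P {\<omega> \<in> space P. dyn \<eta>0 N t \<omega> > 0} in
        (\<forall>k. measure P {\<omega> \<in> space P. N (Suc t) \<omega> = k} = poisson_prob \<rho> k) \<and>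
        prob_space.indep_var P (count_space UNIV) (\<lambda>\<omega>. [N (Suc t) \<omega>]) (count_space UNIV)
          (\<lambda>\<omega>. \<eta>0 \<omega> # map (\<lambda>i. N i \<omega>) [1..<Suc t]))"

(* zeta0 and arrivals M 1, M 2, ... on P realise an M/D/1 queue with arrival
   rate r: M 1, M 2, ... i.i.d. Poisson(r), jointly independent of zeta0;
   the queue is  zeta = dyn zeta0 M. *)
definition md1_queue ::
  "'w measure \<Rightarrow> real \<Rightarrow> ('w \<Rightarrow> nat) \<Rightarrow> (nat \<Rightarrow> 'w \<Rightarrow> nat) \<Rightarrow> bool" where
  "md1_queue P r \<zeta>0 M \<longleftrightarrow>
     prob_space P \<and>
     prob_space.indep_vars P (\<lambda>_. count_space UNIV)
        (\<lambda>i. if i = 0 then \<zeta>0 else M i) (UNIV :: nat set) \<and>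
     (\<forall>t\<ge>1. \<forall>k. measure P {\<omega> \<in> space P. M t \<omega> = k} = poisson_prob r k)"

end

theory Submission
  imports Defs
begin

text \<open>All random variables of the coupling are quantile transforms of one i.i.d. sequence of
uniform variables \<open>U 0, U 1, \<dots>\<close>: \<open>\<eta>(0)\<close> from \<open>U 0\<close>, and \<open>N(t)\<close> resp. \<open>M(t)\<close> from \<open>U t\<close> with
the Poisson laws of means \<open>\<rho>(t - 1)\<close> resp. \<open>r\<close>. The mean of the nonlinear process is conserved,
since the expected arrival \<open>\<rho>(t)\<close> equals the expected service \<open>P(\<eta>(t) > 0)\<close>; hence
\<open>\<rho>(t) \<le> E \<eta>(t) = r\<close>. Poisson laws increase stochastically with the mean, so the quantile
coupling gives \<open>N(t) \<le> M(t)\<close> pointwise, and the recursion is monotone in the arrivals.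
For the exponential moments, independence of \<open>N(t+1)\<close> from the past gives
\<open>E exp(\<lambda> \<eta>(t+1)) \<le> exp(r (e\<^sup>\<lambda> - 1)) (e\<^sup>-\<^sup>\<lambda> E exp(\<lambda> \<eta>(t)) + 1 - e\<^sup>-\<^sup>\<lambda>)\<close>,
an affine recursion that contracts for small \<open>\<lambda> > 0\<close> because \<open>r < 1\<close>.\<close>

section \<open>Poisson distributions\<close>

lemma poisson_prob_nonneg: "0 \<le> \<rho> \<Longrightarrow> 0 \<le> poisson_prob \<rho> k"
  by (simp add: poisson_prob_def)

lemma poisson_prob_Suc: "real (Suc k) * poisson_prob \<rho> (Suc k) = \<rho> * poisson_prob \<rho> k"
proof -
  have "fact (Suc k) = real (Suc k) * (fact k :: real)"
    by (simp only: fact_Suc of_nat_mult)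
  moreover have "(fact k :: real) \<noteq> 0" by simp
  ultimately show ?thesis
    unfolding poisson_prob_def by (simp add: field_simps del: of_nat_Suc)
qed

lemma poisson_prob_sums: "poisson_prob \<rho> sums 1"
proof -
  have "(\<lambda>n. exp (-\<rho>) * (\<rho> ^ n /\<^sub>R fact n)) sums (exp (-\<rho>) * exp \<rho>)"
    by (intro sums_mult exp_converges)
  moreover have "poisson_prob \<rho> = (\<lambda>n. exp (-\<rho>) * (\<rho> ^ n /\<^sub>R fact n))"
    by (auto simp: fun_eq_iff poisson_prob_def divide_inverse)
  ultimately show ?thesis by (simp add: exp_minus)
qed

lemma poisson_exp_moment_sums:
  "(\<lambda>k. exp (l * real k) * poisson_prob \<rho> k) sums exp (\<rho> * (exp l - 1))"
proof -
  have "(\<lambda>n. exp (-\<rho>) * ((\<rho> * exp l) ^ n /\<^sub>R fact n)) sums (exp (-\<rho>) * exp (\<rho> * exp l))"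
    by (intro sums_mult exp_converges)
  moreover have "exp (l * real k) * poisson_prob \<rho> k = exp (-\<rho>) * ((\<rho> * exp l) ^ k /\<^sub>R fact k)" for k
    by (simp add: poisson_prob_def power_mult_distrib exp_of_nat_mult[symmetric] mult_ac divide_inverse)
  moreover have "exp (-\<rho>) * exp (\<rho> * exp l) = exp (\<rho> * (exp l - 1))"
    by (simp add: exp_add[symmetric] algebra_simps)
  ultimately show ?thesis by simp
qed

lemma poisson_mean_sums: "(\<lambda>k. real k * poisson_prob \<rho> k) sums \<rho>"
proof -
  have "(\<lambda>n. \<rho> * poisson_prob \<rho> n) sums (\<rho> * 1)"
    by (intro sums_mult poisson_prob_sums)
  then have "(\<lambda>n. real (Suc n) * poisson_prob \<rho> (Suc n)) sums \<rho>"
    unfolding poisson_prob_Suc by simp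
  then show ?thesis
    using sums_Suc_iff[of "\<lambda>k. real k * poisson_prob \<rho> k" \<rho>] by simp
qed

lemma poisson_prob_Suc_has_derivative:
  "((\<lambda>x. poisson_prob x (Suc k)) has_real_derivative (poisson_prob \<rho> k - poisson_prob \<rho> (Suc k))) (at \<rho>)"
proof -
  have f: "fact (Suc k) = real (Suc k) * (fact k :: real)"
    by (simp only: fact_Suc of_nat_mult)
  show ?thesis unfolding poisson_prob_def f
    by (rule derivative_eq_intros refl | simp del: of_nat_Suc)+
       (simp add: field_simps del: of_nat_Suc)
qed

lemma poisson_cdf_has_derivative:
  "((\<lambda>x. \<Sum>j<Suc k. poisson_prob x j) has_real_derivative (- poisson_prob \<rho> k)) (at \<rho>)"
proof (induction k)
  case 0
  show ?case by (auto simp: poisson_prob_def intro!: derivative_eq_intros)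
next
  case (Suc k)
  show ?case using DERIV_add[OF Suc.IH poisson_prob_Suc_has_derivative[of k]] by simp
qed

lemma poisson_cdf_antimono:
  assumes "0 \<le> \<rho>" "\<rho> \<le> r"
  shows "(\<Sum>j<k. poisson_prob r j) \<le> (\<Sum>j<k. poisson_prob \<rho> j)"
proof (cases k)
  case (Suc m)
  show ?thesis unfolding Suc
  proof (rule DERIV_nonpos_imp_nonincreasing[OF assms(2)])
    fix x assume "\<rho> \<le> x"
    then show "\<exists>y. ((\<lambda>x. \<Sum>j<Suc m. poisson_prob x j) has_real_derivative y) (at x) \<and> y \<le> 0"
      using assms poisson_cdf_has_derivative poisson_prob_nonneg[of x m] by fastforce
  qed
qed simp

lemma sums_pmf_nat: "pmf \<mu> sums 1"
proof -
  have "(\<Sum>k. ennreal (pmf \<mu> k)) = 1"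
    using nn_integral_pmf[where p=\<mu> and A=UNIV]
    by (simp add: nn_integral_count_space_nat measure_pmf.emeasure_space_1[simplified])
  then have "(\<lambda>k. ennreal (pmf \<mu> k)) sums ennreal 1"
    using summable_sums[OF summableI[of "\<lambda>k. ennreal (pmf \<mu> k)"]] by simp
  then show ?thesis by (subst (asm) sums_ennreal) auto
qed

section \<open>Quantile transform\<close>

definition mass_below :: "(nat \<Rightarrow> real) \<Rightarrow> nat \<Rightarrow> real" where
  "mass_below f k = (\<Sum>j<k. f j)"

text \<open>The generalised inverse of the distribution function with point masses \<open>f\<close>; the value
outside \<open>(0,1)\<close> is arbitrary, as that set is null for the uniform law.\<close>
definition quantile :: "(nat \<Rightarrow> real) \<Rightarrow> real \<Rightarrow> nat" where
  "quantile f u = (if u < 1 then (LEAST k. u \<le> mass_below f (Suc k)) else 0)"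

lemma mass_below_exceeds:
  assumes "\<And>k. 0 \<le> f k" "f sums 1" "u < 1"
  shows "\<exists>k. u \<le> mass_below f (Suc k)"
proof -
  have "(\<lambda>n. \<Sum>i<n. f i) \<longlonglongrightarrow> 1" using assms(2) by (simp add: sums_def)
  then have "eventually (\<lambda>n. u < (\<Sum>i<n. f i)) sequentially"
    using assms(3) by (rule order_tendstoD)
  then obtain n where "u < (\<Sum>i<n. f i)" by (auto simp: eventually_sequentially)
  moreover have "(\<Sum>i<n. f i) \<le> (\<Sum>i<Suc n. f i)" using assms(1)[of n] by simp
  ultimately show ?thesis unfolding mass_below_def by (intro exI[of _ n]) simp
qed

lemma mass_below_bounds:
  assumes "\<And>k. 0 \<le> f k" "f sums 1"
  shows "0 \<le> mass_below f k" "mass_below f k \<le> 1"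
  unfolding mass_below_def
  using assms sum_le_suminf[of f "{..<k}"] sums_unique[OF assms(2)]
  by (auto simp: sums_summable sum_nonneg)

lemma quantile_eq_iff:
  assumes f: "\<And>k. 0 \<le> f k" "f sums 1" and u: "0 < u" "u < 1"
  shows "quantile f u = k \<longleftrightarrow> mass_below f k < u \<and> u \<le> mass_below f (Suc k)"
proof
  obtain k0 where k0: "u \<le> mass_below f (Suc k0)" using mass_below_exceeds[OF f u(2)] by blast
  assume "quantile f u = k"
  then have least: "(LEAST k. u \<le> mass_below f (Suc k)) = k" using u by (simp add: quantile_def)
  have "u \<le> mass_below f (Suc k)"
    using LeastI[of "\<lambda>k. u \<le> mass_below f (Suc k)", OF k0] least by simp
  moreover have "mass_below f k < u"
  proof (cases k)
    case 0 then show ?thesis using u by (simp add: mass_below_def)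
  next
    case (Suc j)
    then show ?thesis
      using not_less_Least[of j "\<lambda>k. u \<le> mass_below f (Suc k)"] least by simp
  qed
  ultimately show "mass_below f k < u \<and> u \<le> mass_below f (Suc k)" by simp
next
  assume k: "mass_below f k < u \<and> u \<le> mass_below f (Suc k)"
  have mono: "mass_below f (Suc j) \<le> mass_below f k" if "j < k" for j
    unfolding mass_below_def using f(1) that by (intro sum_mono2) auto
  have "(LEAST k. u \<le> mass_below f (Suc k)) = k"
  proof (rule Least_equality)
    fix y assume "u \<le> mass_below f (Suc y)"
    then show "k \<le> y" using mono[of y] k by (cases "y < k") auto
  qed (use k in simp)
  then show "quantile f u = k" using u by (simp add: quantile_def)
qed

lemma measurable_quantile: "quantile f \<in> measurable borel (count_space UNIV)"
  unfolding quantile_def by measurable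

lemma quantile_antimono:
  assumes g: "\<And>k. 0 \<le> g k" "g sums 1"
    and le: "\<And>k. mass_below g k \<le> mass_below f k"
  shows "quantile f u \<le> quantile g u"
proof (cases "u < 1")
  case True
  obtain k0 where "u \<le> mass_below g (Suc k0)" using mass_below_exceeds[OF g True] by blast
  then have "u \<le> mass_below g (Suc (LEAST k. u \<le> mass_below g (Suc k)))" by (rule LeastI)
  then have "u \<le> mass_below f (Suc (LEAST k. u \<le> mass_below g (Suc k)))"
    using le order_trans by blast
  then have "(LEAST k. u \<le> mass_below f (Suc k)) \<le> (LEAST k. u \<le> mass_below g (Suc k))"
    by (rule Least_le)
  then show ?thesis using True by (simp add: quantile_def)
qed (simp add: quantile_def)

definition unif01 :: "real measure" where
  "unif01 = uniform_measure lborel {0<..<1}"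

lemma prob_space_unif01: "prob_space unif01"
  unfolding unif01_def by (rule prob_space_uniform_measure) auto

lemma sets_unif01[measurable_cong, simp]: "sets unif01 = sets borel"
  by (simp add: unif01_def)

lemma space_unif01[simp]: "space unif01 = UNIV"
  by (simp add: unif01_def)

lemma measurable_quantile_unif01[measurable]: "quantile f \<in> measurable unif01 (count_space UNIV)"
  using measurable_quantile[of f] by (simp add: measurable_cong_sets[OF sets_unif01 refl])

lemma measure_unif01_quantile:
  assumes f: "\<And>k. 0 \<le> f k" "f sums 1"
  shows "measure unif01 {u. quantile f u = k} = f k"
proof -
  let ?I = "{mass_below f k<..mass_below f (Suc k)}"
  have sets: "{u. quantile f u = k} \<in> sets borel"
    using measurable_sets[OF measurable_quantile[of f], of "{k}"] by (simp add: vimage_def)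
  have eq: "{0<..<1} \<inter> {u. quantile f u = k} = {0<..<1} \<inter> ?I"
  proof (intro set_eqI iffI)
    fix u assume "u \<in> {0<..<1} \<inter> {u. quantile f u = k}"
    then show "u \<in> {0<..<1} \<inter> ?I" using quantile_eq_iff[OF f, of u k] by auto
  next
    fix u assume "u \<in> {0<..<1} \<inter> ?I"
    then show "u \<in> {0<..<1} \<inter> {u. quantile f u = k}" using quantile_eq_iff[OF f, of u k] by auto
  qed
  have "0 \<le> mass_below f k" "mass_below f (Suc k) \<le> 1"
    by (rule mass_below_bounds[OF f])+
  moreover have "mass_below f (Suc k) = mass_below f k + f k"
    by (simp add: mass_below_def)
  ultimately have b: "0 \<le> mass_below f k" "mass_below f (Suc k) \<le> 1"
      "mass_below f (Suc k) = mass_below f k + f k" by blast+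
  have "emeasure lborel ({0<..<1} \<inter> ?I) = ennreal (f k)"
  proof (rule antisym)
    have "{0<..<1::real} \<inter> ?I \<subseteq> ?I" by auto
    then show "emeasure lborel ({0<..<1} \<inter> ?I) \<le> ennreal (f k)"
      using emeasure_mono[of _ ?I lborel] b f(1)[of k] by (simp add: emeasure_lborel_Ioc)
    have "{mass_below f k<..<mass_below f (Suc k)} \<subseteq> {0<..<1::real} \<inter> ?I"
      using b by auto
    then show "ennreal (f k) \<le> emeasure lborel ({0<..<1} \<inter> ?I)"
      using emeasure_mono[of "{mass_below f k<..<mass_below f (Suc k)}" _ lborel] b f(1)[of k]
      by (simp add: emeasure_lborel_Ioo)
  qed
  then have "emeasure unif01 {u. quantile f u = k} = ennreal (f k)"
    unfolding unif01_def using sets by (simp add: emeasure_uniform_measure eq divide_ennreal_def)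
  then show ?thesis using f(1)[of k] by (simp add: measure_def)
qed


section \<open>The nonlinear process\<close>

lemma dyn_cong:
  assumes "x0 \<omega> = y0 \<omega>'" "\<And>i. 1 \<le> i \<Longrightarrow> i \<le> t \<Longrightarrow> A i \<omega> = B i \<omega>'"
  shows "dyn x0 A t \<omega> = dyn y0 B t \<omega>'"
  using assms by (induction t) auto

lemma dyn_mono:
  assumes "x0 \<omega> \<le> y0 \<omega>'" "\<And>i. 1 \<le> i \<Longrightarrow> i \<le> t \<Longrightarrow> A i \<omega> \<le> B i \<omega>'"
  shows "dyn x0 A t \<omega> \<le> dyn y0 B t \<omega>'"
  using assms
proof (induction t)
  case (Suc t)
  then have "dyn x0 A t \<omega> \<le> dyn y0 B t \<omega>'" "A (Suc t) \<omega> \<le> B (Suc t) \<omega>'" by auto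
  then show ?case by auto
qed simp

definition dyn_list :: "nat \<Rightarrow> nat list \<Rightarrow> nat" where
  "dyn_list t xs = dyn (\<lambda>_. xs ! 0) (\<lambda>i _. xs ! i) t ()"

lemma nn_integral_nat_valued:
  fixes X :: "'w \<Rightarrow> nat"
  assumes X: "X \<in> measurable M (count_space UNIV)"
  shows "(\<integral>\<^sup>+\<omega>. g (X \<omega>) \<partial>M) = (\<Sum>k. g k * emeasure M {\<omega>\<in>space M. X \<omega> = k})"
proof -
  have "(\<integral>\<^sup>+\<omega>. g (X \<omega>) \<partial>M) = (\<integral>\<^sup>+\<omega>. (\<Sum>k. g k * indicator {\<omega>\<in>space M. X \<omega> = k} \<omega>) \<partial>M)"
  proof (intro nn_integral_cong)
    fix \<omega> assume "\<omega> \<in> space M"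
    then show "g (X \<omega>) = (\<Sum>k. g k * indicator {\<omega>\<in>space M. X \<omega> = k} \<omega>)"
      by (subst suminf_cmult_indicator[where i = "X \<omega>"]) (auto simp: disjoint_family_on_def)
  qed
  also have "\<dots> = (\<Sum>k. \<integral>\<^sup>+\<omega>. g k * indicator {\<omega>\<in>space M. X \<omega> = k} \<omega> \<partial>M)"
    by (rule nn_integral_suminf) (use X in measurable)
  also have "\<dots> = (\<Sum>k. g k * emeasure M {\<omega>\<in>space M. X \<omega> = k})"
    by (intro suminf_cong nn_integral_cmult_indicator) (use X in measurable)
  finally show ?thesis .
qed

lemma (in prob_space) indep_var_nn_integral_mult:
  fixes X Y :: "'a \<Rightarrow> ennreal"
  assumes "indep_var borel X borel Y"
  shows "(\<integral>\<^sup>+\<omega>. X \<omega> * Y \<omega> \<partial>M) = (\<integral>\<^sup>+\<omega>. X \<omega> \<partial>M) * (\<integral>\<^sup>+\<omega>. Y \<omega> \<partial>M)"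
proof -
  have "indep_vars (case_bool borel borel) (case_bool X Y) UNIV"
    using assms unfolding indep_var_def .
  then have "indep_vars (\<lambda>_. borel) (case_bool X Y) UNIV"
    by (rule indep_vars_cong[THEN iffD1, rotated -1]) (auto split: bool.split)
  then have "(\<integral>\<^sup>+\<omega>. (\<Prod>i\<in>UNIV. case_bool X Y i \<omega>) \<partial>M) = (\<Prod>i\<in>UNIV. \<integral>\<^sup>+\<omega>. case_bool X Y i \<omega> \<partial>M)"
    by (intro indep_vars_nn_integral) auto
  then show ?thesis by (simp add: UNIV_bool mult.commute)
qed

lemma ennreal_affine_recursion_bounded:
  fixes x :: "nat \<Rightarrow> ennreal"
  assumes a: "0 \<le> a" "a < 1" and b: "0 \<le> b" and x0: "x 0 < \<infinity>"
    and step: "\<And>t. x (Suc t) \<le> ennreal a * x t + ennreal b"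
  shows "\<exists>C. \<forall>t. x t \<le> ennreal C"
proof -
  define C where "C = max (enn2real (x 0)) (b / (1 - a))"
  have "b / (1 - a) \<le> C" by (simp add: C_def)
  then have "b \<le> (1 - a) * C"
    using a by (simp add: pos_divide_le_eq mult.commute)
  then have fixpoint: "a * C + b \<le> C" by (simp add: algebra_simps)
  have C0: "0 \<le> C" using a b by (simp add: C_def le_max_iff_disj)
  have "x t \<le> ennreal C" for t
  proof (induction t)
    case 0
    have "x 0 = ennreal (enn2real (x 0))" using x0 by (simp add: ennreal_enn2real)
    also have "\<dots> \<le> ennreal C" by (intro ennreal_leI) (simp add: C_def)
    finally show ?case .
  next
    case (Suc t)
    have "x (Suc t) \<le> ennreal a * ennreal C + ennreal b"
      using step[of t] Suc by (meson add_mono_thms_linordered_semiring(3) mult_left_mono order.trans zero_le)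
    also have "\<dots> = ennreal (a * C + b)" using a b C0 by (simp add: ennreal_mult ennreal_plus)
    also have "\<dots> \<le> ennreal C" using fixpoint by (rule ennreal_leI)
    finally show ?case .
  qed
  then show ?thesis by blast
qed

lemma exp_served_le:
  assumes "0 \<le> l"
  shows "exp (l * real (n - (if n > 0 then 1 else 0))) \<le> exp (-l) * exp (l * real n) + (1 - exp (-l))"
proof (cases "n > 0")
  case True
  then have "l * real (n - 1) = -l + l * real n" by (simp add: of_nat_diff algebra_simps)
  then have "exp (l * real (n - 1)) = exp (-l) * exp (l * real n)" by (metis exp_add)
  then show ?thesis using True assms by simp
qed (use assms in simp)

text \<open>\<open>exp (-l) * exp (r * (exp l - 1))\<close> is the contraction factor of the recursion for the
exponential moments; it equals \<open>1\<close> at \<open>l = 0\<close>, with derivative \<open>r - 1 < 0\<close> there.\<close>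
lemma exists_contracting_exponent:
  fixes r l0 :: real
  assumes r: "0 < r" "r < 1" and l0: "0 < l0"
  shows "\<exists>l. 0 < l \<and> l \<le> l0 \<and> exp (-l) * exp (r * (exp l - 1)) < 1"
proof -
  define l where "l = min l0 (- ln r / 2)"
  have lnr: "ln r < 0" using r by simp
  have lpos: "0 < l" using l0 lnr by (simp add: l_def)
  have "exp l < exp (- ln r)" using lnr by (simp add: l_def)
  also have "exp (- ln r) = 1 / r" using r by (simp add: exp_minus inverse_eq_divide)
  finally have rel: "r * exp l < 1" using r by (simp add: field_simps)
  have "exp l * (1 - l) \<le> exp l * exp (-l)"
    using exp_ge_add_one_self[of "-l"] by (intro mult_left_mono) auto
  then have "exp l - 1 \<le> l * exp l" by (simp add: exp_minus field_simps)
  then have "r * (exp l - 1) \<le> l * (r * exp l)" using r by (simp add: mult_left_mono mult.left_commute)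
  also have "\<dots> < l" using rel lpos by simp
  finally have "-l + r * (exp l - 1) < 0" by simp
  then have "exp (-l) * exp (r * (exp l - 1)) < 1"
    by (simp add: exp_add[symmetric])
  then show ?thesis using lpos by (intro exI[of _ l]) (simp add: l_def)
qed

locale nonlinear_proc =
  fixes P :: "'w measure" and \<mu>0 :: "nat pmf" and \<eta>0 :: "'w \<Rightarrow> nat" and N :: "nat \<Rightarrow> 'w \<Rightarrow> nat"
  assumes nonlinear_process: "nonlinear_process P \<mu>0 \<eta>0 N"

sublocale nonlinear_proc \<subseteq> prob_space P
  using nonlinear_process unfolding nonlinear_process_def by simp

context nonlinear_proc
begin

definition rho :: "nat \<Rightarrow> real" where
  "rho t = measure P {\<omega>\<in>space P. dyn \<eta>0 N t \<omega> > 0}"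

definition history :: "nat \<Rightarrow> 'w \<Rightarrow> nat list" where
  "history t \<omega> = \<eta>0 \<omega> # map (\<lambda>i. N i \<omega>) [1..<Suc t]"

lemma rho_nonneg: "0 \<le> rho t"
  by (simp add: rho_def)

lemma measure_init: "measure P {\<omega>\<in>space P. \<eta>0 \<omega> = k} = pmf \<mu>0 k"
  using nonlinear_process unfolding nonlinear_process_def by blast

lemma measure_arrival: "measure P {\<omega>\<in>space P. N (Suc t) \<omega> = k} = poisson_prob (rho t) k"
  using nonlinear_process unfolding nonlinear_process_def rho_def Let_def by blast

lemma indep_arrival_history:
  "indep_var (count_space UNIV) (\<lambda>\<omega>. [N (Suc t) \<omega>]) (count_space UNIV) (history t)"
  using nonlinear_process unfolding nonlinear_process_def Let_def history_def by blast

lemma measurable_init[measurable]: "\<eta>0 \<in> measurable P (count_space UNIV)"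
  using nonlinear_process unfolding nonlinear_process_def by blast

lemma measurable_history[measurable]: "history t \<in> measurable P (count_space UNIV)"
  using indep_var_rv2[OF indep_arrival_history] .

lemma measurable_arrival[measurable]: "N (Suc t) \<in> measurable P (count_space UNIV)"
proof -
  have "(\<lambda>\<omega>. hd [N (Suc t) \<omega>]) \<in> measurable P (count_space UNIV)"
    using indep_var_rv1[OF indep_arrival_history, of t] by measurable
  then show ?thesis by simp
qed

lemma dyn_eq_dyn_list: "dyn \<eta>0 N t \<omega> = dyn_list t (history t \<omega>)"
  unfolding dyn_list_def
proof (rule dyn_cong)
  fix i assume "1 \<le> i" "i \<le> t"
  then show "N i \<omega> = history t \<omega> ! i"
    by (cases i) (auto simp: history_def nth_map nth_upt simp del: upt_Suc)
qed (simp add: history_def)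

lemma measurable_dyn[measurable]: "dyn \<eta>0 N t \<in> measurable P (count_space UNIV)"
proof -
  have "(\<lambda>\<omega>. dyn_list t (history t \<omega>)) \<in> measurable P (count_space UNIV)" by measurable
  then show ?thesis by (simp add: dyn_eq_dyn_list[abs_def])
qed

lemma nn_integral_init: "(\<integral>\<^sup>+\<omega>. g (\<eta>0 \<omega>) \<partial>P) = (\<integral>\<^sup>+n. g n \<partial>measure_pmf \<mu>0)"
  by (simp add: nn_integral_nat_valued[OF measurable_init] emeasure_eq_measure measure_init
      nn_integral_measure_pmf nn_integral_count_space_nat mult.commute)

lemma nn_integral_arrival:
  "(\<integral>\<^sup>+\<omega>. g (N (Suc t) \<omega>) \<partial>P) = (\<Sum>k. g k * ennreal (poisson_prob (rho t) k))"
  by (simp add: nn_integral_nat_valued[OF measurable_arrival] emeasure_eq_measure measure_arrival)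

lemma nn_integral_arrival_mean: "(\<integral>\<^sup>+\<omega>. of_nat (N (Suc t) \<omega>) \<partial>P) = ennreal (rho t)"
proof -
  have "(\<integral>\<^sup>+\<omega>. of_nat (N (Suc t) \<omega>) \<partial>P) = (\<Sum>k. ennreal (real k * poisson_prob (rho t) k))"
    unfolding nn_integral_arrival
    by (simp add: ennreal_of_nat_eq_real_of_nat ennreal_mult poisson_prob_nonneg rho_nonneg)
  also have "\<dots> = ennreal (rho t)"
    by (rule suminf_ennreal_eq[OF _ poisson_mean_sums]) (simp add: poisson_prob_nonneg rho_nonneg)
  finally show ?thesis .
qed

lemma nn_integral_busy:
  "(\<integral>\<^sup>+\<omega>. of_nat (if dyn \<eta>0 N t \<omega> > 0 then 1 else 0) \<partial>P) = ennreal (rho t)"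
proof -
  have "(\<integral>\<^sup>+\<omega>. of_nat (if dyn \<eta>0 N t \<omega> > 0 then 1 else 0) \<partial>P)
      = (\<integral>\<^sup>+\<omega>. indicator {\<omega>\<in>space P. dyn \<eta>0 N t \<omega> > 0} \<omega> \<partial>P)"
    by (intro nn_integral_cong) auto
  also have "\<dots> = ennreal (rho t)"
    by (simp add: emeasure_eq_measure rho_def)
  finally show ?thesis .
qed

lemma nn_integral_dyn_Suc:
  "(\<integral>\<^sup>+\<omega>. of_nat (dyn \<eta>0 N (Suc t) \<omega>) \<partial>P) = (\<integral>\<^sup>+\<omega>. of_nat (dyn \<eta>0 N t \<omega>) \<partial>P)"
proof -
  define d where "d = dyn \<eta>0 N t"
  define s where "s \<omega> = (if d \<omega> > 0 then 1 else (0::nat))" for \<omega>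
  have [measurable]: "d \<in> measurable P (count_space UNIV)" "s \<in> measurable P (count_space UNIV)"
    unfolding s_def d_def by measurable
  have "(\<integral>\<^sup>+\<omega>. of_nat (dyn \<eta>0 N (Suc t) \<omega>) \<partial>P)
      = (\<integral>\<^sup>+\<omega>. (of_nat (d \<omega> - s \<omega>) + of_nat (N (Suc t) \<omega>) :: ennreal) \<partial>P)"
    by (intro nn_integral_cong) (simp add: d_def s_def del: of_nat_add add: of_nat_add[symmetric])
  also have "\<dots> = (\<integral>\<^sup>+\<omega>. of_nat (d \<omega> - s \<omega>) \<partial>P) + (\<integral>\<^sup>+\<omega>. of_nat (s \<omega>) \<partial>P)"
    by (simp add: nn_integral_add nn_integral_arrival_mean nn_integral_busy s_def d_def)
  also have "\<dots> = (\<integral>\<^sup>+\<omega>. (of_nat (d \<omega> - s \<omega>) + of_nat (s \<omega>) :: ennreal) \<partial>P)"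
    by (rule nn_integral_add[symmetric]) measurable
  also have "\<dots> = (\<integral>\<^sup>+\<omega>. of_nat (dyn \<eta>0 N t \<omega>) \<partial>P)"
    by (intro nn_integral_cong) (auto simp: s_def d_def of_nat_add[symmetric] simp del: of_nat_add)
  finally show ?thesis .
qed

lemma nn_integral_dyn_eq_mean:
  assumes "(\<integral>\<^sup>+n. of_nat n \<partial>measure_pmf \<mu>0) = ennreal r"
  shows "(\<integral>\<^sup>+\<omega>. of_nat (dyn \<eta>0 N t \<omega>) \<partial>P) = ennreal r"
proof (induction t)
  case 0
  show ?case using nn_integral_init[of of_nat] assms by simp
next
  case (Suc t)
  show ?case by (simp only: nn_integral_dyn_Suc Suc.IH)
qed

lemma rho_le_mean:
  assumes "(\<integral>\<^sup>+n. of_nat n \<partial>measure_pmf \<mu>0) = ennreal r" "0 \<le> r"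
  shows "rho t \<le> r"
proof -
  have "ennreal (rho t) \<le> (\<integral>\<^sup>+\<omega>. of_nat (dyn \<eta>0 N t \<omega>) \<partial>P)"
    unfolding nn_integral_busy[symmetric] by (intro nn_integral_mono) auto
  then show ?thesis using assms by (simp add: nn_integral_dyn_eq_mean)
qed

definition exp_moment :: "real \<Rightarrow> nat \<Rightarrow> ennreal" where
  "exp_moment l t = (\<integral>\<^sup>+\<omega>. ennreal (exp (l * real (dyn \<eta>0 N t \<omega>))) \<partial>P)"

lemma nn_integral_exp_arrival:
  "(\<integral>\<^sup>+\<omega>. ennreal (exp (l * real (N (Suc t) \<omega>))) \<partial>P) = ennreal (exp (rho t * (exp l - 1)))"
proof -
  have "(\<integral>\<^sup>+\<omega>. ennreal (exp (l * real (N (Suc t) \<omega>))) \<partial>P)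
      = (\<Sum>k. ennreal (exp (l * real k) * poisson_prob (rho t) k))"
    using nn_integral_arrival[of "\<lambda>n. ennreal (exp (l * real n))"]
    by (simp add: ennreal_mult poisson_prob_nonneg rho_nonneg)
  also have "\<dots> = ennreal (exp (rho t * (exp l - 1)))"
    by (rule suminf_ennreal_eq[OF _ poisson_exp_moment_sums]) (simp add: poisson_prob_nonneg rho_nonneg)
  finally show ?thesis .
qed

lemma exp_moment_Suc:
  "exp_moment l (Suc t) = (\<integral>\<^sup>+\<omega>. ennreal (exp (l * real (N (Suc t) \<omega>))) \<partial>P) *
     (\<integral>\<^sup>+\<omega>. ennreal (exp (l * real (dyn \<eta>0 N t \<omega> - (if dyn \<eta>0 N t \<omega> > 0 then 1 else 0)))) \<partial>P)"
proof -
  define Y1 where "Y1 xs = ennreal (exp (l * real (hd xs :: nat)))" for xs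
  define Y2 where "Y2 xs = ennreal (exp (l * real (dyn_list t xs - (if dyn_list t xs > 0 then 1 else 0))))"
    for xs
  have "indep_var borel (Y1 \<circ> (\<lambda>\<omega>. [N (Suc t) \<omega>])) borel (Y2 \<circ> history t)"
    by (rule indep_var_compose[OF indep_arrival_history]) (simp_all add: borel_measurable_count_space)
  then have "(\<integral>\<^sup>+\<omega>. Y1 [N (Suc t) \<omega>] * Y2 (history t \<omega>) \<partial>P)
      = (\<integral>\<^sup>+\<omega>. Y1 [N (Suc t) \<omega>] \<partial>P) * (\<integral>\<^sup>+\<omega>. Y2 (history t \<omega>) \<partial>P)"
    by (simp add: indep_var_nn_integral_mult comp_def)
  moreover have "ennreal (exp (l * real (dyn \<eta>0 N (Suc t) \<omega>))) = Y1 [N (Suc t) \<omega>] * Y2 (history t \<omega>)"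
    for \<omega>
  proof -
    define d where "d = dyn \<eta>0 N t \<omega>"
    have "dyn \<eta>0 N (Suc t) \<omega> = N (Suc t) \<omega> + (d - (if d > 0 then 1 else 0))"
      by (simp add: d_def)
    then have "exp (l * real (dyn \<eta>0 N (Suc t) \<omega>))
        = exp (l * real (N (Suc t) \<omega>)) * exp (l * real (d - (if d > 0 then 1 else 0)))"
      by (simp only: of_nat_add distrib_left exp_add)
    then show ?thesis
      by (simp add: Y1_def Y2_def d_def dyn_eq_dyn_list[symmetric] ennreal_mult del: dyn.simps)
  qed
  ultimately show ?thesis
    by (simp add: exp_moment_def Y1_def Y2_def dyn_eq_dyn_list[symmetric] del: dyn.simps)
qed

lemma nn_integral_exp_served_le:
  assumes "0 \<le> l"
  shows "(\<integral>\<^sup>+\<omega>. ennreal (exp (l * real (dyn \<eta>0 N t \<omega> - (if dyn \<eta>0 N t \<omega> > 0 then 1 else 0)))) \<partial>P)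
    \<le> ennreal (exp (-l)) * exp_moment l t + ennreal (1 - exp (-l))"
proof -
  have "(\<integral>\<^sup>+\<omega>. ennreal (exp (l * real (dyn \<eta>0 N t \<omega> - (if dyn \<eta>0 N t \<omega> > 0 then 1 else 0)))) \<partial>P)
      \<le> (\<integral>\<^sup>+\<omega>. ennreal (exp (-l)) * ennreal (exp (l * real (dyn \<eta>0 N t \<omega>))) + ennreal (1 - exp (-l)) \<partial>P)"
    using exp_served_le[OF assms] assms
    by (intro nn_integral_mono)
       (simp add: ennreal_mult[symmetric] ennreal_plus[symmetric] del: ennreal_plus ennreal_plus_if)
  also have "\<dots> = ennreal (exp (-l)) * exp_moment l t + ennreal (1 - exp (-l))"
    unfolding exp_moment_def by (subst nn_integral_add) (auto simp: nn_integral_cmult emeasure_space_1)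
  finally show ?thesis .
qed

lemma exp_moment_Suc_le:
  assumes l: "0 \<le> l" and rho: "rho t \<le> r"
  shows "exp_moment l (Suc t) \<le> ennreal (exp (-l) * exp (r * (exp l - 1))) * exp_moment l t
            + ennreal ((1 - exp (-l)) * exp (r * (exp l - 1)))"
proof -
  define E where "E = exp (r * (exp l - 1))"
  have "ennreal (exp (rho t * (exp l - 1))) \<le> ennreal E"
    unfolding E_def using rho l by (intro ennreal_leI) (simp add: mult_right_mono)
  then have "exp_moment l (Suc t) \<le> ennreal E * (ennreal (exp (-l)) * exp_moment l t + ennreal (1 - exp (-l)))"
    unfolding exp_moment_Suc nn_integral_exp_arrival
    by (intro mult_mono nn_integral_exp_served_le l) auto
  also have "\<dots> = ennreal (exp (-l) * E) * exp_moment l t + ennreal ((1 - exp (-l)) * E)"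
  proof -
    have "ennreal (exp (-l) * E) = ennreal (exp (-l)) * ennreal E"
      by (rule ennreal_mult) (auto simp: E_def)
    moreover have "ennreal ((1 - exp (-l)) * E) = ennreal (1 - exp (-l)) * ennreal E"
      using l by (intro ennreal_mult) (auto simp: E_def)
    ultimately show ?thesis by (simp only: distrib_left mult_ac)
  qed
  finally show ?thesis unfolding E_def .
qed

lemma exp_moment_bounded:
  assumes r: "0 < r" "r < 1" and mean: "(\<integral>\<^sup>+n. of_nat n \<partial>measure_pmf \<mu>0) = ennreal r"
    and l0: "0 < l0" "(\<integral>\<^sup>+ n. ennreal (exp (l0 * real n)) \<partial>measure_pmf \<mu>0) < \<infinity>"
  shows "\<exists>l>0. (SUP t. exp_moment l t) < \<infinity>"
proof -
  obtain l where l: "0 < l" "l \<le> l0" "exp (-l) * exp (r * (exp l - 1)) < 1"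
    using exists_contracting_exponent[OF r l0(1)] by blast
  have "exp_moment l 0 = (\<integral>\<^sup>+ n. ennreal (exp (l * real n)) \<partial>measure_pmf \<mu>0)"
    unfolding exp_moment_def by (simp add: nn_integral_init[of "\<lambda>n. ennreal (exp (l * real n))"])
  also have "\<dots> \<le> (\<integral>\<^sup>+ n. ennreal (exp (l0 * real n)) \<partial>measure_pmf \<mu>0)"
    using l by (intro nn_integral_mono ennreal_leI) (simp add: mult_right_mono)
  finally have "exp_moment l 0 < \<infinity>" using l0(2) by (rule le_less_trans)
  moreover have "exp_moment l (Suc t) \<le> ennreal (exp (-l) * exp (r * (exp l - 1))) * exp_moment l t
            + ennreal ((1 - exp (-l)) * exp (r * (exp l - 1)))" for t
    using rho_le_mean[OF mean] r l by (intro exp_moment_Suc_le) auto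
  moreover have "0 \<le> exp (-l) * exp (r * (exp l - 1))" "0 \<le> (1 - exp (-l)) * exp (r * (exp l - 1))"
    using l by simp_all
  ultimately obtain C where C: "\<And>t. exp_moment l t \<le> ennreal C"
    using ennreal_affine_recursion_bounded[of _ _ "exp_moment l"] l(3) by metis
  have "(SUP t. exp_moment l t) \<le> ennreal C" by (rule SUP_least) (rule C)
  then have "(SUP t. exp_moment l t) < \<infinity>" by (simp add: le_less_trans)
  then show ?thesis using l(1) by blast
qed

end

section \<open>The coupling\<close>

lemma measurable_map_list:
  fixes Z :: "nat \<Rightarrow> 'a \<Rightarrow> 'b::countable"
  assumes "\<And>i. i \<in> set is \<Longrightarrow> Z i \<in> measurable M (count_space UNIV)"
  shows "(\<lambda>x. map (\<lambda>i. Z i x) is) \<in> measurable M (count_space UNIV)"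
  using assms
proof (induction "is")
  case (Cons a "is")
  have "(\<lambda>x. (Z a x, map (\<lambda>i. Z i x) is)) \<in> measurable M (count_space UNIV \<Otimes>\<^sub>M count_space UNIV)"
    using Cons by (intro measurable_Pair) auto
  moreover have "(\<lambda>p. fst p # snd p)
      \<in> measurable (count_space UNIV \<Otimes>\<^sub>M count_space (UNIV :: 'b list set)) (count_space UNIV)"
    by (simp add: pair_measure_countable)
  ultimately show ?case using measurable_compose by fastforce
qed simp

definition unif_seq :: "(nat \<Rightarrow> real) measure" where
  "unif_seq = PiM UNIV (\<lambda>_. unif01)"

lemma prob_space_unif_seq: "prob_space unif_seq"
  unfolding unif_seq_def by (intro prob_space_PiM prob_space_unif01)

lemma measurable_unif_seq_component[measurable]: "(\<lambda>\<omega>. \<omega> i) \<in> measurable unif_seq unif01"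
  unfolding unif_seq_def by (rule measurable_component_singleton) simp

lemma distr_unif_seq_component: "distr unif_seq unif01 (\<lambda>\<omega>. \<omega> i) = unif01"
  unfolding unif_seq_def by (intro distr_PiM_component prob_space_unif01) auto

lemma indep_vars_unif_seq: "prob_space.indep_vars unif_seq (\<lambda>_. unif01) (\<lambda>i \<omega>. \<omega> i) UNIV"
proof -
  interpret prob_space unif_seq by (rule prob_space_unif_seq)
  have "distr unif_seq (\<Pi>\<^sub>M i\<in>UNIV. unif01) (\<lambda>x. \<lambda>i\<in>UNIV. x i) = unif_seq"
    by (simp add: unif_seq_def restrict_UNIV distr_id)
  also have "\<dots> = (\<Pi>\<^sub>M i\<in>UNIV. distr unif_seq unif01 (\<lambda>\<omega>. \<omega> i))"
    by (simp only: distr_unif_seq_component) (simp add: unif_seq_def)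
  finally show ?thesis
    by (subst indep_vars_iff_distr_eq_PiM) auto
qed

lemma measure_unif_seq_quantile:
  assumes f: "\<And>k. 0 \<le> f k" "f sums 1"
  shows "measure unif_seq {\<omega>\<in>space unif_seq. quantile f (\<omega> i) = k} = f k"
proof -
  have sets: "{u. quantile f u = k} \<in> sets unif01"
    using measurable_sets[OF measurable_quantile_unif01[of f], of "{k}"] by (simp add: vimage_def)
  have "measure unif_seq {\<omega>\<in>space unif_seq. quantile f (\<omega> i) = k}
      = measure unif_seq ((\<lambda>\<omega>. \<omega> i) -` {u. quantile f u = k} \<inter> space unif_seq)"
    by (rule arg_cong[where f="measure unif_seq"]) auto
  also have "\<dots> = measure (distr unif_seq unif01 (\<lambda>\<omega>. \<omega> i)) {u. quantile f u = k}"
    by (rule measure_distr[symmetric]) (use sets in auto)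
  also have "\<dots> = f k"
    by (simp add: distr_unif_seq_component measure_unif01_quantile[OF f])
  finally show ?thesis .
qed

lemma indep_var_quantile_lists:
  assumes "set is \<inter> set js = {}"
  shows "prob_space.indep_var unif_seq
    (count_space UNIV) (\<lambda>\<omega>. map (\<lambda>i. quantile (g i) (\<omega> i)) is)
    (count_space UNIV) (\<lambda>\<omega>. map (\<lambda>i. quantile (g i) (\<omega> i)) js)"
proof -
  let ?restr = "\<lambda>A \<omega>. restrict (\<lambda>i. \<omega> i) A"
  let ?Q = "\<lambda>ks x. map (\<lambda>i. quantile (g i) (x i)) ks"
  have "(\<lambda>x. quantile (g i) (x i)) \<in> measurable (PiM I (\<lambda>_. unif01)) (count_space UNIV)"
    if "i \<in> I" for i I
    by (rule measurable_compose[OF measurable_component_singleton[of i I "\<lambda>_. unif01", OF that]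
          measurable_quantile_unif01])
  then have meas: "?Q ks \<in> measurable (PiM (set ks) (\<lambda>_. unif01)) (count_space UNIV)" for ks
    by (intro measurable_map_list) simp
  have "prob_space.indep_var unif_seq (PiM (set is) (\<lambda>_. unif01)) (?restr (set is))
      (PiM (set js) (\<lambda>_. unif01)) (?restr (set js))"
    by (rule prob_space.indep_var_restrict[OF prob_space_unif_seq indep_vars_unif_seq assms]) auto
  then have "prob_space.indep_var unif_seq (count_space UNIV) (?Q is \<circ> ?restr (set is))
      (count_space UNIV) (?Q js \<circ> ?restr (set js))"
    by (rule prob_space.indep_var_compose[OF prob_space_unif_seq _ meas meas])
  moreover have "?Q ks \<circ> ?restr (set ks) = (\<lambda>\<omega>. ?Q ks \<omega>)" for ks
    by (auto simp: fun_eq_iff)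
  ultimately show ?thesis by simp
qed

lemma indep_vars_quantiles:
  "prob_space.indep_vars unif_seq (\<lambda>_. count_space UNIV) (\<lambda>i \<omega>. quantile (g i) (\<omega> i)) UNIV"
  by (rule prob_space.indep_vars_compose2[OF prob_space_unif_seq indep_vars_unif_seq]) simp

definition coupled_init :: "nat pmf \<Rightarrow> (nat \<Rightarrow> real) \<Rightarrow> nat" where
  "coupled_init \<mu>0 \<omega> = quantile (pmf \<mu>0) (\<omega> 0)"

definition queue_arrivals :: "real \<Rightarrow> nat \<Rightarrow> (nat \<Rightarrow> real) \<Rightarrow> nat" where
  "queue_arrivals r i \<omega> = quantile (poisson_prob r) (\<omega> i)"

text \<open>\<open>\<rho>(t)\<close> depends on the law of the arrivals up to time \<open>t\<close>, so the arrivals are fixed by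
recursion on \<open>t\<close>: \<open>coupled_arrivals_upto \<mu>0 t\<close> defines those at times \<open>1, \<dots>, t\<close>.\<close>
fun coupled_arrivals_upto :: "nat pmf \<Rightarrow> nat \<Rightarrow> nat \<Rightarrow> (nat \<Rightarrow> real) \<Rightarrow> nat" where
  "coupled_arrivals_upto \<mu>0 0 = (\<lambda>i \<omega>. 0)"
| "coupled_arrivals_upto \<mu>0 (Suc t) = (coupled_arrivals_upto \<mu>0 t)(Suc t := (\<lambda>\<omega>.
     quantile (poisson_prob (measure unif_seq
       {\<omega>\<in>space unif_seq. dyn (coupled_init \<mu>0) (coupled_arrivals_upto \<mu>0 t) t \<omega> > 0})) (\<omega> (Suc t))))"

definition coupled_arrivals :: "nat pmf \<Rightarrow> nat \<Rightarrow> (nat \<Rightarrow> real) \<Rightarrow> nat" where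
  "coupled_arrivals \<mu>0 i = coupled_arrivals_upto \<mu>0 i i"

definition coupled_rho :: "nat pmf \<Rightarrow> nat \<Rightarrow> real" where
  "coupled_rho \<mu>0 t =
     measure unif_seq {\<omega>\<in>space unif_seq. dyn (coupled_init \<mu>0) (coupled_arrivals \<mu>0) t \<omega> > 0}"

lemma coupled_arrivals_upto_stable: "i \<le> t \<Longrightarrow> coupled_arrivals_upto \<mu>0 t i = coupled_arrivals \<mu>0 i"
  unfolding coupled_arrivals_def
proof (induction t)
  case (Suc t) then show ?case by (cases "i = Suc t") auto
qed simp

lemma coupled_arrivals_Suc:
  "coupled_arrivals \<mu>0 (Suc t) \<omega> = quantile (poisson_prob (coupled_rho \<mu>0 t)) (\<omega> (Suc t))"
proof -
  have "dyn (coupled_init \<mu>0) (coupled_arrivals_upto \<mu>0 t) t = dyn (coupled_init \<mu>0) (coupled_arrivals \<mu>0) t"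
    by (intro ext dyn_cong) (simp_all add: coupled_arrivals_upto_stable)
  then show ?thesis by (simp add: coupled_arrivals_def coupled_rho_def)
qed

definition coupled_pmf :: "nat pmf \<Rightarrow> nat \<Rightarrow> nat \<Rightarrow> real" where
  "coupled_pmf \<mu>0 i = (if i = 0 then pmf \<mu>0 else poisson_prob (coupled_rho \<mu>0 (i - 1)))"

lemma quantile_coupled_pmf:
  "quantile (coupled_pmf \<mu>0 i) (\<omega> i) = (if i = 0 then coupled_init \<mu>0 \<omega> else coupled_arrivals \<mu>0 i \<omega>)"
  by (cases i) (simp_all add: coupled_pmf_def coupled_init_def coupled_arrivals_Suc)

lemma coupled_nonlinear_process:
  "nonlinear_process unif_seq \<mu>0 (coupled_init \<mu>0) (coupled_arrivals \<mu>0)"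
proof -
  let ?Q = "\<lambda>ks \<omega>. map (\<lambda>i. quantile (coupled_pmf \<mu>0 i) (\<omega> i)) ks"
  have "coupled_init \<mu>0 \<in> measurable unif_seq (count_space UNIV)"
    unfolding coupled_init_def by measurable
  moreover have "measure unif_seq {\<omega>\<in>space unif_seq. coupled_init \<mu>0 \<omega> = k} = pmf \<mu>0 k" for k
    unfolding coupled_init_def by (rule measure_unif_seq_quantile) (auto intro: sums_pmf_nat)
  moreover have "measure unif_seq {\<omega>\<in>space unif_seq. coupled_arrivals \<mu>0 (Suc t) \<omega> = k}
      = poisson_prob (coupled_rho \<mu>0 t) k" for t k
    unfolding coupled_arrivals_Suc coupled_rho_def[symmetric]
    by (rule measure_unif_seq_quantile) (auto intro: poisson_prob_sums poisson_prob_nonneg simp: coupled_rho_def)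
  moreover have "prob_space.indep_var unif_seq (count_space UNIV) (?Q [Suc t]) (count_space UNIV) (?Q [0..<Suc t])"
    for t by (rule indep_var_quantile_lists) simp
  moreover have "?Q [Suc t] = (\<lambda>\<omega>. [coupled_arrivals \<mu>0 (Suc t) \<omega>])"
      "?Q [0..<Suc t] = (\<lambda>\<omega>. coupled_init \<mu>0 \<omega> # map (\<lambda>i. coupled_arrivals \<mu>0 i \<omega>) [1..<Suc t])" for t
    by (auto simp: fun_eq_iff quantile_coupled_pmf upt_conv_Cons simp del: upt_Suc)
  ultimately show ?thesis
    unfolding nonlinear_process_def Let_def coupled_rho_def using prob_space_unif_seq by simp
qed

lemma coupled_md1_queue: "0 \<le> r \<Longrightarrow> md1_queue unif_seq r (coupled_init \<mu>0) (queue_arrivals r)"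
proof -
  assume r: "0 \<le> r"
  have "(\<lambda>i \<omega>. quantile (if i = 0 then pmf \<mu>0 else poisson_prob r) (\<omega> i))
      = (\<lambda>i. if i = 0 then coupled_init \<mu>0 else queue_arrivals r i)"
    by (auto simp: fun_eq_iff coupled_init_def queue_arrivals_def)
  then have "prob_space.indep_vars unif_seq (\<lambda>_. count_space UNIV)
      (\<lambda>i. if i = 0 then coupled_init \<mu>0 else queue_arrivals r i) UNIV"
    using indep_vars_quantiles[of "\<lambda>i. if i = 0 then pmf \<mu>0 else poisson_prob r"] by simp
  moreover have "measure unif_seq {\<omega>\<in>space unif_seq. queue_arrivals r t \<omega> = k} = poisson_prob r k" for t k
    unfolding queue_arrivals_def using r
    by (intro measure_unif_seq_quantile poisson_prob_sums poisson_prob_nonneg)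
  ultimately show ?thesis
    unfolding md1_queue_def using prob_space_unif_seq by blast
qed

lemma coupled_dyn_le_queue:
  assumes r: "0 \<le> r" and mean: "(\<integral>\<^sup>+n. of_nat n \<partial>measure_pmf \<mu>0) = ennreal r"
  shows "dyn (coupled_init \<mu>0) (coupled_arrivals \<mu>0) t \<omega> \<le> dyn (coupled_init \<mu>0) (queue_arrivals r) t \<omega>"
proof (rule dyn_mono)
  interpret nonlinear_proc unif_seq \<mu>0 "coupled_init \<mu>0" "coupled_arrivals \<mu>0"
    by (rule nonlinear_proc.intro[OF coupled_nonlinear_process])
  fix i :: nat assume "1 \<le> i"
  then obtain j where j: "i = Suc j" by (cases i) auto
  have "coupled_rho \<mu>0 j \<le> r"
    using rho_le_mean[OF mean r, of j] by (simp add: rho_def coupled_rho_def)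
  then have "mass_below (poisson_prob r) k \<le> mass_below (poisson_prob (coupled_rho \<mu>0 j)) k" for k
    unfolding mass_below_def by (intro poisson_cdf_antimono) (simp_all add: coupled_rho_def)
  then show "coupled_arrivals \<mu>0 i \<omega> \<le> queue_arrivals r i \<omega>"
    unfolding j coupled_arrivals_Suc queue_arrivals_def
    by (rule quantile_antimono[OF poisson_prob_nonneg[OF r] poisson_prob_sums])
qed simp

theorem mainTheorem4:
  fixes \<mu>0 :: "nat pmf" and r :: real
  assumes "0 < r" and "r < 1"
    and "integrable (measure_pmf \<mu>0) real"
    and "measure_pmf.expectation \<mu>0 real = r"
  shows "(\<exists>(P :: (nat \<Rightarrow> real) measure) \<eta>0 N M.
            nonlinear_process P \<mu>0 \<eta>0 N \<and> md1_queue P r \<eta>0 M \<and>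
            (\<forall>t. AE \<omega> in P. dyn \<eta>0 N t \<omega> \<le> dyn \<eta>0 M t \<omega>))
       \<and> ((\<exists>l0>0. (\<integral>\<^sup>+ n. ennreal (exp (l0 * real n)) \<partial>measure_pmf \<mu>0) < \<infinity>) \<longrightarrow>
           (\<forall>(P :: 'w measure) \<eta>0 N. nonlinear_process P \<mu>0 \<eta>0 N \<longrightarrow>
              (\<exists>l>0. (SUP t. \<integral>\<^sup>+ \<omega>. ennreal (exp (l * real (dyn \<eta>0 N t \<omega>))) \<partial>P) < \<infinity>)))"
proof (intro conjI impI allI)
  have mean: "(\<integral>\<^sup>+n. of_nat n \<partial>measure_pmf \<mu>0) = ennreal r"
    using nn_integral_eq_integral[OF assms(3)] assms(4) by (simp add: ennreal_of_nat_eq_real_of_nat)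
  have "\<forall>t. AE \<omega> in unif_seq.
      dyn (coupled_init \<mu>0) (coupled_arrivals \<mu>0) t \<omega> \<le> dyn (coupled_init \<mu>0) (queue_arrivals r) t \<omega>"
    using coupled_dyn_le_queue[OF _ mean] assms(1) by (simp add: AE_I2)
  then show "\<exists>(P :: (nat \<Rightarrow> real) measure) \<eta>0 N M.
          nonlinear_process P \<mu>0 \<eta>0 N \<and> md1_queue P r \<eta>0 M \<and>
          (\<forall>t. AE \<omega> in P. dyn \<eta>0 N t \<omega> \<le> dyn \<eta>0 M t \<omega>)"
    using coupled_nonlinear_process coupled_md1_queue assms(1) by (meson less_imp_le)
  fix P :: "'w measure" and \<eta>0 N
  assume "\<exists>l0>0. (\<integral>\<^sup>+ n. ennreal (exp (l0 * real n)) \<partial>measure_pmf \<mu>0) < \<infinity>"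
    and "nonlinear_process P \<mu>0 \<eta>0 N"
  then interpret nonlinear_proc P \<mu>0 \<eta>0 N
    by (intro nonlinear_proc.intro)
  show "\<exists>l>0. (SUP t. \<integral>\<^sup>+ \<omega>. ennreal (exp (l * real (dyn \<eta>0 N t \<omega>))) \<partial>P) < \<infinity>"
    using exp_moment_bounded[OF assms(1,2) mean] \<open>\<exists>l0>0. _\<close> unfolding exp_moment_def by blast
qed

end
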